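(* Let $A$ be a meet-complemented lattice in which $\Box x$ and $\Diamond x$ exist for every $x\in A$, and let $a,b\in A$. Then (i) $\neg\neg a\le\Box\Diamond a$; (ii) $\Box a\le\Box\Diamond a$; (B1) $a\le\Box\Diamond a$; (B2) $\Diamond\Box a\le a$; (A) $\Diamond a\le b$ if and only if $a\le\Box b$; (iii) $\Diamond\Box\Diamond a=\Diamond a$ and $\Box\Diamond\Box a=\Box a$.
   Context: A meet-complemented lattice is a lattice $(L,\le)$ (not necessarily distributive) such that for every $a\in L$ the element $\neg a=\max\{b\in L: a\wedge b\le c\ \text{for all } c\in L\}$ exists; it is bounded with bottom $0$ and top $1$. For $a\in L$, $\Box a=\max\{b\in L: a\vee\neg b=1\}$ and $\Diamond a=\min\{b\in L: \neg a\vee b=1\}$. *)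

theory Defs
  imports Main
begin

definition is_max :: "('a::order \<Rightarrow> bool) \<Rightarrow> 'a \<Rightarrow> bool" where
  "is_max P x \<longleftrightarrow> P x \<and> (\<forall>y. P y \<longrightarrow> y \<le> x)"

definition is_min :: "('a::order \<Rightarrow> bool) \<Rightarrow> 'a \<Rightarrow> bool" where
  "is_min P x \<longleftrightarrow> P x \<and> (\<forall>y. P y \<longrightarrow> x \<le> y)"

definition meet_complemented :: "'a::bounded_lattice itself \<Rightarrow> bool" where
  "meet_complemented _ \<longleftrightarrow>
     (\<forall>a::'a. \<exists>n. is_max (\<lambda>b. \<forall>c. inf a b \<le> c) n)"

definition mneg :: "'a::bounded_lattice \<Rightarrow> 'a" where
  "mneg a = (GREATEST b. \<forall>c. inf a b \<le> c)"

definition mbox :: "'a::bounded_lattice \<Rightarrow> 'a" where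
  "mbox a = (GREATEST b. sup a (mneg b) = top)"

definition mdia :: "'a::bounded_lattice \<Rightarrow> 'a" where
  "mdia a = (LEAST b. sup (mneg a) b = top)"

end

theory Submission
  imports Defs
begin

text \<open>
  Both modalities are characterised by one-line conditions: \<open>y \<le> \<box>x\<close> iff \<open>x \<or> \<not>y = 1\<close>, and
  \<open>\<diamond>x \<le> y\<close> iff \<open>\<not>x \<or> y = 1\<close>. Hence \<open>\<diamond>\<close> is left adjoint to \<open>\<box>\<close>, which gives (A), (B1), (B2)
  and (iii) by the usual Galois-connection calculus. For (i), \<open>\<not>x \<le> \<not>\<not>\<not>x\<close> turns
  \<open>\<not>x \<or> \<diamond>x = 1\<close> into \<open>\<diamond>x \<or> \<not>(\<not>\<not>x) = 1\<close>; (ii) then follows from \<open>\<box>x \<le> \<not>\<not>x\<close>, which holds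
  because \<open>y = \<box>x \<and> \<not>x\<close> satisfies \<open>x \<le> \<not>y\<close> and \<open>\<not>\<box>x \<le> \<not>y\<close>, so \<open>\<not>y = 1\<close> and \<open>y = 0\<close>.
\<close>

lemma is_max_GREATEST: "is_max P x \<Longrightarrow> (GREATEST b. P b) = x"
  unfolding is_max_def by (intro Greatest_equality) auto

lemma is_min_LEAST: "is_min P x \<Longrightarrow> (LEAST b. P b) = x"
  unfolding is_min_def by (intro Least_equality) auto

lemma galois_unit:
  fixes f g :: "'a::order \<Rightarrow> 'a"
  assumes "\<And>x y. f x \<le> y \<longleftrightarrow> x \<le> g y"
  shows "x \<le> g (f x)"
  using assms by blast

lemma galois_counit:
  fixes f g :: "'a::order \<Rightarrow> 'a"
  assumes "\<And>x y. f x \<le> y \<longleftrightarrow> x \<le> g y"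
  shows "f (g x) \<le> x"
  using assms by blast

lemma galois_fgf:
  fixes f g :: "'a::order \<Rightarrow> 'a"
  assumes adj: "\<And>x y. f x \<le> y \<longleftrightarrow> x \<le> g y"
  shows "f (g (f x)) = f x"
proof (rule antisym)
  show "f (g (f x)) \<le> f x" by (rule galois_counit[OF adj])
  have "x \<le> g (f (g (f x)))"
    using galois_unit[OF adj] galois_counit[OF adj] adj order_trans by metis
  then show "f x \<le> f (g (f x))" using adj by blast
qed

lemma galois_gfg:
  fixes f g :: "'a::order \<Rightarrow> 'a"
  assumes adj: "\<And>x y. f x \<le> y \<longleftrightarrow> x \<le> g y"
  shows "g (f (g x)) = g x"
proof (rule antisym)
  show "g x \<le> g (f (g x))" by (rule galois_unit[OF adj])
  have "f (g (f (g x))) \<le> x"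
    using galois_unit[OF adj] galois_counit[OF adj] adj order_trans by metis
  then show "g (f (g x)) \<le> g x" using adj by blast
qed

lemma mneg_is_max:
  fixes x :: "'a::bounded_lattice"
  assumes "meet_complemented TYPE('a)"
  shows "is_max (\<lambda>b. \<forall>c. inf x b \<le> c) (mneg x)"
proof -
  obtain n where "is_max (\<lambda>b. \<forall>c. inf x b \<le> c) n"
    using assms unfolding meet_complemented_def by blast
  then show ?thesis unfolding mneg_def by (simp add: is_max_GREATEST)
qed

lemma le_mneg_iff:
  fixes x y :: "'a::bounded_lattice"
  assumes "meet_complemented TYPE('a)"
  shows "y \<le> mneg x \<longleftrightarrow> inf x y = bot"
  using mneg_is_max[OF assms, of x] unfolding is_max_def
  by (metis bot.extremum bot.extremum_uniqueI inf_mono order_refl)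

lemma inf_mneg_eq_bot:
  fixes x :: "'a::bounded_lattice"
  assumes "meet_complemented TYPE('a)"
  shows "inf x (mneg x) = bot"
  using le_mneg_iff[OF assms] by blast

lemma mneg_antimono:
  fixes x y :: "'a::bounded_lattice"
  assumes "meet_complemented TYPE('a)" and "x \<le> y"
  shows "mneg y \<le> mneg x"
proof -
  have "inf x (mneg y) \<le> inf y (mneg y)" using assms(2) by (simp add: le_infI1)
  then show ?thesis
    using le_mneg_iff[OF assms(1)] inf_mneg_eq_bot[OF assms(1)] by (metis bot.extremum_uniqueI)
qed

lemma le_mneg_mneg:
  fixes x :: "'a::bounded_lattice"
  assumes "meet_complemented TYPE('a)"
  shows "x \<le> mneg (mneg x)"
  using le_mneg_iff[OF assms] inf_mneg_eq_bot[OF assms] by (simp add: inf_commute)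

lemma le_mbox_iff:
  fixes x y :: "'a::bounded_lattice"
  assumes mc: "meet_complemented TYPE('a)"
    and box_ex: "\<exists>z. is_max (\<lambda>b. sup x (mneg b) = top) z"
  shows "y \<le> mbox x \<longleftrightarrow> sup x (mneg y) = top"
proof -
  have box: "is_max (\<lambda>b. sup x (mneg b) = top) (mbox x)"
    using box_ex unfolding mbox_def by (metis is_max_GREATEST)
  show ?thesis
  proof
    assume "y \<le> mbox x"
    then have "sup x (mneg (mbox x)) \<le> sup x (mneg y)"
      using mneg_antimono[OF mc] sup_mono by blast
    then show "sup x (mneg y) = top"
      using box unfolding is_max_def by (metis top.extremum_uniqueI)
  qed (use box in \<open>simp add: is_max_def\<close>)
qed

lemma mdia_le_iff:
  fixes x y :: "'a::bounded_lattice"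
  assumes "\<exists>z. is_min (\<lambda>b. sup (mneg x) b = top) z"
  shows "mdia x \<le> y \<longleftrightarrow> sup (mneg x) y = top"
proof -
  have dia: "is_min (\<lambda>b. sup (mneg x) b = top) (mdia x)"
    using assms unfolding mdia_def by (metis is_min_LEAST)
  show ?thesis
  proof
    assume "mdia x \<le> y"
    then have "sup (mneg x) (mdia x) \<le> sup (mneg x) y" using sup_mono by blast
    then show "sup (mneg x) y = top"
      using dia unfolding is_min_def by (metis top.extremum_uniqueI)
  qed (use dia in \<open>simp add: is_min_def\<close>)
qed

lemma mbox_le_mneg_mneg:
  fixes x :: "'a::bounded_lattice"
  assumes mc: "meet_complemented TYPE('a)"
    and box_ex: "\<exists>z. is_max (\<lambda>b. sup x (mneg b) = top) z"
  shows "mbox x \<le> mneg (mneg x)"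
proof -
  define y where "y = inf (mbox x) (mneg x)"
  have "sup x (mneg (mbox x)) = top"
    using le_mbox_iff[OF assms] by blast
  moreover have "mneg (mbox x) \<le> mneg y"
    unfolding y_def by (rule mneg_antimono[OF mc]) simp
  moreover have "x \<le> mneg y"
  proof -
    have "inf y x \<le> inf x (mneg x)" unfolding y_def by (simp add: le_infI2 le_infI1)
    then show ?thesis
      using le_mneg_iff[OF mc] inf_mneg_eq_bot[OF mc]
      by (metis bot.extremum_uniqueI)
  qed
  ultimately have "mneg y = top" by (metis sup_least top.extremum_uniqueI)
  then have "y = bot" using inf_mneg_eq_bot[OF mc, of y] by simp
  then show ?thesis unfolding y_def using le_mneg_iff[OF mc] by (simp add: inf_commute)
qed

lemma mneg_mneg_le_mbox_mdia:
  fixes x :: "'a::bounded_lattice"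
  assumes mc: "meet_complemented TYPE('a)"
    and box_ex: "\<exists>z. is_max (\<lambda>b. sup (mdia x) (mneg b) = top) z"
    and dia_ex: "\<exists>z. is_min (\<lambda>b. sup (mneg x) b = top) z"
  shows "mneg (mneg x) \<le> mbox (mdia x)"
proof -
  have "sup (mdia x) (mneg x) = top"
    using mdia_le_iff[OF dia_ex, of "mdia x"] by (simp add: sup_commute)
  moreover have "sup (mdia x) (mneg x) \<le> sup (mdia x) (mneg (mneg (mneg x)))"
    using le_mneg_mneg[OF mc] sup_mono by blast
  ultimately show ?thesis
    using le_mbox_iff[OF mc box_ex] by (metis top.extremum_uniqueI)
qed

theorem lemma14:
  fixes a b :: "'a::bounded_lattice"
  assumes mc: "meet_complemented TYPE('a)"
    and box_ex: "\<forall>x::'a. \<exists>y. is_max (\<lambda>b. sup x (mneg b) = top) y"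
    and dia_ex: "\<forall>x::'a. \<exists>y. is_min (\<lambda>b. sup (mneg x) b = top) y"
  shows "mneg (mneg a) \<le> mbox (mdia a)
       \<and> mbox a \<le> mbox (mdia a)
       \<and> a \<le> mbox (mdia a)
       \<and> mdia (mbox a) \<le> a
       \<and> (mdia a \<le> b \<longleftrightarrow> a \<le> mbox b)
       \<and> mdia (mbox (mdia a)) = mdia a
       \<and> mbox (mdia (mbox a)) = mbox a"
proof -
  have adj: "mdia x \<le> y \<longleftrightarrow> x \<le> mbox y" for x y :: 'a
    using mdia_le_iff[OF dia_ex[rule_format]] le_mbox_iff[OF mc box_ex[rule_format]]
    by (simp add: sup_commute)
  have i: "mneg (mneg a) \<le> mbox (mdia a)"
    using mneg_mneg_le_mbox_mdia[OF mc box_ex[rule_format] dia_ex[rule_format]] .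
  moreover have "mbox a \<le> mbox (mdia a)"
    using mbox_le_mneg_mneg[OF mc box_ex[rule_format]] i by (rule order_trans)
  ultimately show ?thesis
    using adj galois_unit[OF adj] galois_counit[OF adj] galois_fgf[OF adj] galois_gfg[OF adj]
    by blast
qed

end
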